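(* Let $T$ be a complete discrete valuation ring with fraction field $K$ and uniformizer $t$. Let $\widehat R_0 \supset T$ be a complete discrete valuation ring with uniformizer $t$ and fraction field $F_0$, with absolute value $|t^n u| = \alpha^{-n}$ ($\alpha>1$ fixed, $u \in \widehat R_0^\times$). Let $F_1, F_2 \subset F_0$ be subfields containing $T$ and let $V \subset F_1 \cap \widehat R_0$, $W \subset F_2 \cap \widehat R_0$ be $t$-adically complete $T$-submodules with $V + W = \widehat R_0$, $V \cap t\widehat R_0 = tV$ and $W \cap t\widehat R_0 = tW$. Let $n$ be a positive integer, let $\Omega \subset F_0^n \times F_0^n$ be an open neighborhood of $(0,0)$ and let $f: \Omega \to F_0^n$ be an analytic map such that (i) $f(0,0)=0$ and (ii) $f(x,0) = f(0,x) = x$ for all $x$ in an open neighborhood of $0$. Then there is a real number $\epsilon>0$ such that for every $a \in F_0^n$ with $|a| \le \epsilon$ there exist $v \in V^n$ and $w \in W^n$ with $(v,w) \in \Omega$ and $f(v,w) = a$.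
   Context: $t$-adically complete means $V \to \varprojlim_m V/t^{m+1}V$ is an isomorphism. On $F_0^n$ one uses the max norm. *)

theory Defs
  imports Complex_Main
begin

definition subring_of :: "'a::field set \<Rightarrow> bool" where
  "subring_of R \<longleftrightarrow> 0 \<in> R \<and> 1 \<in> R \<and> (\<forall>x\<in>R. \<forall>y\<in>R. x + y \<in> R \<and> x - y \<in> R \<and> x * y \<in> R)"

definition subfield_of :: "'a::field set \<Rightarrow> bool" where
  "subfield_of F \<longleftrightarrow> subring_of F \<and> (\<forall>x\<in>F. x \<noteq> 0 \<longrightarrow> inverse x \<in> F)"

definition unit_in :: "'a::field set \<Rightarrow> 'a \<Rightarrow> bool" where
  "unit_in R u \<longleftrightarrow> u \<in> R \<and> u \<noteq> 0 \<and> inverse u \<in> R"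

text \<open>\<open>R\<close> is a discrete valuation ring with uniformizer \<open>t\<close> whose fraction field
  is the whole ambient field: every nonzero element is \<open>t^k u\<close>, \<open>k\<close> an integer,
  \<open>u\<close> a unit of \<open>R\<close>, and \<open>t\<close> is a non-unit of \<open>R\<close>.\<close>
definition dvr_frac_field :: "'a::field set \<Rightarrow> 'a \<Rightarrow> bool" where
  "dvr_frac_field R t \<longleftrightarrow> subring_of R \<and> t \<in> R \<and> t \<noteq> 0 \<and> \<not> unit_in R t \<and>
     (\<forall>x. x \<noteq> 0 \<longrightarrow> (\<exists>k::int. \<exists>u. unit_in R u \<and> x = t powi k * u))"

definition dvr_with_uniformizer :: "'a::field set \<Rightarrow> 'a \<Rightarrow> bool" where
  "dvr_with_uniformizer T t \<longleftrightarrow> subring_of T \<and> t \<in> T \<and> t \<noteq> 0 \<and> \<not> unit_in T t \<and>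
     (\<forall>x\<in>T. x \<noteq> 0 \<longrightarrow> (\<exists>k::nat. \<exists>u. unit_in T u \<and> x = t ^ k * u))"

definition smul_set :: "'a::field \<Rightarrow> 'a set \<Rightarrow> 'a set" where
  "smul_set c V = (\<lambda>x. c * x) ` V"

definition submodule_over :: "'a::field set \<Rightarrow> 'a set \<Rightarrow> bool" where
  "submodule_over T V \<longleftrightarrow> 0 \<in> V \<and> (\<forall>x\<in>V. \<forall>y\<in>V. x + y \<in> V) \<and> (\<forall>a\<in>T. \<forall>x\<in>V. a * x \<in> V)"

text \<open>\<open>t\<close>-adic completeness: the canonical map \<open>V \<rightarrow> lim V/t^{m+1}V\<close> is bijective.
  Injectivity: \<open>\<Inter>_m t^{m+1} V = 0\<close>. Surjectivity: every compatible system of residues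
  (represented by \<open>x_m \<in> V\<close> with \<open>x_{m+1} - x_m \<in> t^{m+1} V\<close>) comes from an element.\<close>
definition t_adically_complete :: "'a::field \<Rightarrow> 'a set \<Rightarrow> bool" where
  "t_adically_complete t V \<longleftrightarrow>
     (\<forall>x\<in>V. (\<forall>m. x \<in> smul_set (t ^ Suc m) V) \<longrightarrow> x = 0) \<and>
     (\<forall>xs. (\<forall>m. xs m \<in> V) \<and> (\<forall>m. xs (Suc m) - xs m \<in> smul_set (t ^ Suc m) V) \<longrightarrow>
        (\<exists>x\<in>V. \<forall>m. x - xs m \<in> smul_set (t ^ Suc m) V))"

text \<open>Max norm on \<open>F_0^n\<close> (vectors as functions on a finite nonempty index type) and on
  \<open>F_0^n \<times> F_0^n = F_0^{2n}\<close>.\<close>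
definition vnorm :: "('a \<Rightarrow> real) \<Rightarrow> ('n::finite \<Rightarrow> 'a) \<Rightarrow> real" where
  "vnorm nv x = Max (range (\<lambda>i. nv (x i)))"

definition pnorm :: "('a \<Rightarrow> real) \<Rightarrow> ('n::finite \<Rightarrow> 'a) \<times> ('n \<Rightarrow> 'a) \<Rightarrow> real" where
  "pnorm nv p = max (vnorm nv (fst p)) (vnorm nv (snd p))"

definition vsub :: "('n \<Rightarrow> 'a::field) \<Rightarrow> ('n \<Rightarrow> 'a) \<Rightarrow> ('n \<Rightarrow> 'a)" where
  "vsub x y = (\<lambda>i. x i - y i)"

definition psub :: "('n \<Rightarrow> 'a::field) \<times> ('n \<Rightarrow> 'a) \<Rightarrow> ('n \<Rightarrow> 'a) \<times> ('n \<Rightarrow> 'a) \<Rightarrow> ('n \<Rightarrow> 'a) \<times> ('n \<Rightarrow> 'a)" where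
  "psub p q = (vsub (fst p) (fst q), vsub (snd p) (snd q))"

definition open_vec :: "('a::field \<Rightarrow> real) \<Rightarrow> ('n::finite \<Rightarrow> 'a) set \<Rightarrow> bool" where
  "open_vec nv U \<longleftrightarrow> (\<forall>x\<in>U. \<exists>r>0. \<forall>y. vnorm nv (vsub y x) < r \<longrightarrow> y \<in> U)"

definition open_pair :: "('a::field \<Rightarrow> real) \<Rightarrow> (('n::finite \<Rightarrow> 'a) \<times> ('n \<Rightarrow> 'a)) set \<Rightarrow> bool" where
  "open_pair nv U \<longleftrightarrow> (\<forall>p\<in>U. \<exists>r>0. \<forall>q. pnorm nv (psub q p) < r \<longrightarrow> q \<in> U)"

definition nv_has_sum :: "('a::field \<Rightarrow> real) \<Rightarrow> ('i \<Rightarrow> 'a) \<Rightarrow> 'a \<Rightarrow> bool" where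
  "nv_has_sum nv g s \<longleftrightarrow>
     (\<forall>e>0. \<exists>A. finite A \<and> (\<forall>B. finite B \<and> A \<subseteq> B \<longrightarrow> nv (sum g B - s) < e))"

definition monomial2 :: "('n::finite \<Rightarrow> 'a::field) \<times> ('n \<Rightarrow> 'a) \<Rightarrow> ('n + 'n \<Rightarrow> nat) \<Rightarrow> 'a" where
  "monomial2 p \<nu> = (\<Prod>j\<in>UNIV. fst p j ^ \<nu> (Inl j)) * (\<Prod>j\<in>UNIV. snd p j ^ \<nu> (Inr j))"

definition analytic_pair_on :: "('a::field \<Rightarrow> real) \<Rightarrow> (('n::finite \<Rightarrow> 'a) \<times> ('n \<Rightarrow> 'a)) set \<Rightarrow>
    (('n \<Rightarrow> 'a) \<times> ('n \<Rightarrow> 'a) \<Rightarrow> ('n \<Rightarrow> 'a)) \<Rightarrow> bool" where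
  "analytic_pair_on nv \<Omega> f \<longleftrightarrow>
     (\<forall>p\<in>\<Omega>. \<exists>r>0. \<exists>c :: ('n + 'n \<Rightarrow> nat) \<Rightarrow> 'n \<Rightarrow> 'a.
        \<forall>q. pnorm nv (psub q p) < r \<longrightarrow>
          q \<in> \<Omega> \<and> (\<forall>i. nv_has_sum nv (\<lambda>\<nu>. c \<nu> i * monomial2 (psub q p) \<nu>) (f q i)))"

end

theory Submission
  imports Defs
begin

(*
  Write f(x, y) = x + y + g(x, y). Since f(x, 0) = x and f(0, y) = y, the power series of g at
  the origin contains only mixed monomials, all of degree at least 2. On the ball of radius r
  such a monomial varies by at most O(r) times the variation of its argument, so for r = |t|^N
  small enough g is a contraction with constant |t| for the (non-archimedean) max norm.
  Given a with |a| <= |t|^N, solve f(v, w) = a by successive approximation: if the error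
  a - f(p) has norm at most |t|^m, split it as t^m v' + t^m w' with v' in V^n, w' in W^n
  (possible since V + W = R0) and correct p by (t^m v', t^m w'); the new error is the
  difference of the values of g, of norm at most |t|^(m+1). The corrections converge
  t-adically in V^n and W^n, and the limit is an exact solution.
*)

lemma vnorm_ge: "nv (x i) \<le> vnorm nv x"
  unfolding vnorm_def by (rule Max_ge) auto

lemma vnorm_le_iff: "vnorm nv x \<le> b \<longleftrightarrow> (\<forall>i. nv (x i) \<le> b)"
  unfolding vnorm_def by (subst Max_le_iff) auto

lemma pnorm_le_iff: "pnorm nv p \<le> b \<longleftrightarrow> (\<forall>i. nv (fst p i) \<le> b \<and> nv (snd p i) \<le> b)"
  unfolding pnorm_def by (auto simp: vnorm_le_iff)

lemma pnorm_ge_coord: "nv (case_sum (fst p) (snd p) s) \<le> pnorm nv p"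
  using pnorm_le_iff[of nv p "pnorm nv p"] by (cases s) auto

lemma psub_coord:
  "case_sum (fst (psub p q)) (snd (psub p q)) s = case_sum (fst p) (snd p) s - case_sum (fst q) (snd q) s"
  by (cases s) (simp_all add: psub_def vsub_def)

lemma psub_zero [simp]: "psub p (\<lambda>_. 0, \<lambda>_. 0) = p"
  by (simp add: psub_def vsub_def)

lemma vsub_zero [simp]: "vsub x (\<lambda>_. 0) = x"
  by (simp add: vsub_def)

definition nonlinear_part ::
    "(('n \<Rightarrow> 'a::ab_group_add) \<times> ('n \<Rightarrow> 'a) \<Rightarrow> 'n \<Rightarrow> 'a) \<Rightarrow> ('n \<Rightarrow> 'a) \<times> ('n \<Rightarrow> 'a) \<Rightarrow> 'n \<Rightarrow> 'a" where
  "nonlinear_part f p i = f p i - fst p i - snd p i"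

section \<open>Monomials in two vector variables\<close>

definition total_degree :: "('i::finite \<Rightarrow> nat) \<Rightarrow> nat" where
  "total_degree \<nu> = (\<Sum>s\<in>UNIV. \<nu> s)"

definition is_mixed :: "('n + 'n \<Rightarrow> nat) \<Rightarrow> bool" where
  "is_mixed \<nu> \<longleftrightarrow> (\<exists>j. \<nu> (Inl j) \<noteq> 0) \<and> (\<exists>j. \<nu> (Inr j) \<noteq> 0)"

lemma total_degree_ge_2_if_mixed:
  fixes \<nu> :: "'n::finite + 'n \<Rightarrow> nat"
  assumes "is_mixed \<nu>"
  shows "2 \<le> total_degree \<nu>"
proof -
  obtain j j' where "\<nu> (Inl j) \<noteq> 0" "\<nu> (Inr j') \<noteq> 0"
    using assms unfolding is_mixed_def by blast
  moreover have "(\<Sum>s\<in>{Inl j, Inr j'}. \<nu> s) \<le> total_degree \<nu>"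
    unfolding total_degree_def by (rule sum_mono2) auto
  ultimately show ?thesis
    by simp
qed

lemma monomial2_zero_snd:
  "monomial2 (x, \<lambda>_. 0) \<nu> = (if \<forall>j. \<nu> (Inr j) = 0 then monomial2 (x, y) \<nu> else 0)"
  by (auto simp: monomial2_def intro!: prod_zero)

lemma monomial2_zero_fst:
  "monomial2 (\<lambda>_. 0, y) \<nu> = (if \<forall>j. \<nu> (Inl j) = 0 then monomial2 (x, y) \<nu> else 0)"
  by (auto simp: monomial2_def intro!: prod_zero)

lemma monomial2_zero: "monomial2 (\<lambda>_. 0, \<lambda>_. 0) \<nu> = (if \<nu> = (\<lambda>_. 0) then 1 else 0)"
proof -
  have "monomial2 (\<lambda>_. 0, \<lambda>_. 0) \<nu> = (if \<forall>j. \<nu> (Inr j) = 0 then monomial2 (\<lambda>_. 0, \<lambda>_. 1) \<nu> else 0)"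
    by (rule monomial2_zero_snd)
  moreover have "monomial2 (\<lambda>_. 0, \<lambda>_. 1) \<nu> = (if \<forall>j. \<nu> (Inl j) = 0 then monomial2 (\<lambda>_. 1, \<lambda>_. 1) \<nu> else 0)"
    by (rule monomial2_zero_fst)
  moreover have "\<nu> = (\<lambda>_. 0) \<longleftrightarrow> (\<forall>j. \<nu> (Inl j) = 0) \<and> (\<forall>j. \<nu> (Inr j) = 0)"
    unfolding fun_eq_iff by (rule split_sum_all)
  ultimately show ?thesis
    by (simp add: monomial2_def)
qed

lemma monomial2_eq_prod: "monomial2 p \<nu> = (\<Prod>s\<in>UNIV. case_sum (fst p) (snd p) s ^ \<nu> s)"
  by (subst UNIV_Plus_UNIV[symmetric], subst prod.Plus) (simp_all add: monomial2_def comp_def)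

lemma monomial2_const: "monomial2 (\<lambda>_. u, \<lambda>_. u) \<nu> = u ^ total_degree \<nu>"
proof -
  have "case_sum (\<lambda>_. u) (\<lambda>_. u) s = u" for s :: "'n + 'n"
    by (cases s) simp_all
  then show ?thesis
    unfolding monomial2_eq_prod fst_conv snd_conv by (simp add: total_degree_def power_sum)
qed

section \<open>Non-archimedean absolute values\<close>

locale nonarchimedean_abs =
  fixes nv :: "'a::field \<Rightarrow> real"
  assumes nonneg: "nv x \<ge> 0"
    and eq_0_iff: "nv x = 0 \<longleftrightarrow> x = 0"
    and mult: "nv (x * y) = nv x * nv y"
    and ultrametric: "nv (x + y) \<le> max (nv x) (nv y)"
begin

lemma nv_0 [simp]: "nv 0 = 0"
  using eq_0_iff by simp

lemma nv_1 [simp]: "nv 1 = 1"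
  using mult[of 1 1] eq_0_iff[of 1] by simp

lemma nv_minus [simp]: "nv (- x) = nv x"
proof -
  have "nv (- 1) * nv (- 1) = 1"
    using mult[of "- 1" "- 1"] by simp
  then have "nv (- 1) = 1"
    using nonneg[of "- 1"] power2_eq_1_iff[of "nv (- 1)"] by (auto simp: power2_eq_square)
  then show ?thesis
    using mult[of "- 1" x] by simp
qed

lemma nv_diff_le_max: "nv (x - y) \<le> max (nv x) (nv y)"
  using ultrametric[of x "- y"] by simp

lemma nv_add_le: "nv x \<le> b \<Longrightarrow> nv y \<le> b \<Longrightarrow> nv (x + y) \<le> b"
  using ultrametric[of x y] by simp

lemma nv_diff_le: "nv x \<le> b \<Longrightarrow> nv y \<le> b \<Longrightarrow> nv (x - y) \<le> b"
  using nv_diff_le_max[of x y] by simp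

lemma nv_sum_le: "(\<And>x. x \<in> A \<Longrightarrow> nv (g x) \<le> b) \<Longrightarrow> b \<ge> 0 \<Longrightarrow> nv (sum g A) \<le> b"
  by (induction A rule: infinite_finite_induct) (auto intro: nv_add_le)

lemma nv_prod: "nv (prod g A) = (\<Prod>x\<in>A. nv (g x))"
  by (induction A rule: infinite_finite_induct) (simp_all add: mult)

lemma nv_power: "nv (x ^ n) = nv x ^ n"
  by (induction n) (simp_all add: mult)

lemma eq_0_if_nv_small: "(\<And>e. e > 0 \<Longrightarrow> nv x < e) \<Longrightarrow> x = 0"
  using eq_0_iff nonneg by (metis less_irrefl order_le_less)

lemma vnorm_nonneg: "vnorm nv x \<ge> 0"
  using vnorm_ge[of nv x] nonneg order_trans by blast

lemma vnorm_zero [simp]: "vnorm nv (\<lambda>_. 0) = 0"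
  by (rule order_antisym) (simp_all add: vnorm_le_iff vnorm_nonneg)

lemma pnorm_nonneg: "pnorm nv p \<ge> 0"
  by (simp add: pnorm_def le_max_iff_disj vnorm_nonneg)

lemma pnorm_zero_snd [simp]: "pnorm nv (x, \<lambda>_. 0) = vnorm nv x"
  by (simp add: pnorm_def vnorm_nonneg max_absorb1)

lemma pnorm_zero_fst [simp]: "pnorm nv (\<lambda>_. 0, y) = vnorm nv y"
  by (simp add: pnorm_def vnorm_nonneg max_absorb2)

lemma pnorm_le_if_psub_le:
  assumes "pnorm nv p \<le> b" "pnorm nv (psub q p) \<le> b"
  shows "pnorm nv q \<le> b"
proof -
  have "nv (fst q i) \<le> b \<and> nv (snd q i) \<le> b" for i
  proof -
    have "nv (fst p i) \<le> b" "nv (fst q i - fst p i) \<le> b" "nv (snd p i) \<le> b" "nv (snd q i - snd p i) \<le> b"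
      using assms by (simp_all add: pnorm_le_iff psub_def vsub_def)
    then have "nv (fst p i + (fst q i - fst p i)) \<le> b" "nv (snd p i + (snd q i - snd p i)) \<le> b"
      by (simp_all only: nv_add_le)
    then show ?thesis
      by simp
  qed
  then show ?thesis
    by (simp add: pnorm_le_iff)
qed

lemma nv_has_sum_diff:
  assumes "nv_has_sum nv g s" "nv_has_sum nv h s'"
  shows "nv_has_sum nv (\<lambda>x. g x - h x) (s - s')"
  unfolding nv_has_sum_def
proof (intro allI impI)
  fix e :: real
  assume "e > 0"
  obtain A1 where A1: "finite A1" "\<forall>B. finite B \<and> A1 \<subseteq> B \<longrightarrow> nv (sum g B - s) < e"
    using assms(1) \<open>e > 0\<close> unfolding nv_has_sum_def by blast
  obtain A2 where A2: "finite A2" "\<forall>B. finite B \<and> A2 \<subseteq> B \<longrightarrow> nv (sum h B - s') < e"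
    using assms(2) \<open>e > 0\<close> unfolding nv_has_sum_def by blast
  have "nv ((\<Sum>x\<in>B. g x - h x) - (s - s')) < e" if "finite B" "A1 \<union> A2 \<subseteq> B" for B
  proof -
    have "(\<Sum>x\<in>B. g x - h x) - (s - s') = (sum g B - s) - (sum h B - s')"
      by (simp add: sum_subtractf)
    also have "nv \<dots> < e"
      using nv_diff_le_max[of "sum g B - s" "sum h B - s'"] A1(2)[rule_format, of B] A2(2)[rule_format, of B]
        that by simp
    finally show ?thesis .
  qed
  with A1(1) A2(1) show "\<exists>A. finite A \<and> (\<forall>B. finite B \<and> A \<subseteq> B \<longrightarrow> nv ((\<Sum>x\<in>B. g x - h x) - (s - s')) < e)"
    by (intro exI[of _ "A1 \<union> A2"]) simp
qed

lemma nv_has_sum_le: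
  assumes "nv_has_sum nv g s" "\<And>x. nv (g x) \<le> b" "b \<ge> 0"
  shows "nv s \<le> b"
proof (rule ccontr)
  assume "\<not> nv s \<le> b"
  then have "nv s - b > 0"
    by simp
  then obtain A where "finite A" "nv (sum g A - s) < nv s - b"
    using assms(1) unfolding nv_has_sum_def by blast
  moreover have "nv (sum g A) \<le> b"
    using assms(2,3) by (rule nv_sum_le)
  ultimately show False
    using nv_diff_le_max[of "sum g A" "sum g A - s"] assms(3) \<open>\<not> nv s \<le> b\<close>
    by (simp add: max_def split: if_splits)
qed

lemma nv_has_sum_terms_bounded:
  assumes "nv_has_sum nv g s"
  shows "\<exists>b\<ge>0. \<forall>x. nv (g x) \<le> b"
proof -
  obtain A where A: "finite A" "\<forall>B. finite B \<and> A \<subseteq> B \<longrightarrow> nv (sum g B - s) < 1"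
    using assms zero_less_one unfolding nv_has_sum_def by blast
  have "nv (g x) \<le> 1 + (\<Sum>y\<in>A. nv (g y))" for x
  proof (cases "x \<in> A")
    case True
    then show ?thesis
      using A(1) nonneg member_le_sum[of x A "\<lambda>y. nv (g y)"] by simp
  next
    case False
    then have "g x = (sum g (insert x A) - s) - (sum g A - s)"
      using A(1) by simp
    moreover have "nv (sum g (insert x A) - s) < 1" "nv (sum g A - s) < 1"
      using A(1) A(2)[rule_format, of "insert x A"] A(2)[rule_format, of A] by auto
    ultimately have "nv (g x) \<le> 1"
      using nv_diff_le[of "sum g (insert x A) - s" 1 "sum g A - s"] by simp
    moreover have "(\<Sum>y\<in>A. nv (g y)) \<ge> 0"
      by (simp add: nonneg sum_nonneg)
    ultimately show ?thesis by linarith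
  qed
  moreover have "1 + (\<Sum>y\<in>A. nv (g y)) \<ge> 0"
    by (simp add: nonneg sum_nonneg)
  ultimately show ?thesis
    by blast
qed

lemma nv_has_sum_eq_single:
  assumes "nv_has_sum nv g s" "\<And>x. x \<noteq> x0 \<Longrightarrow> g x = 0"
  shows "s = g x0"
proof -
  have "nv (g x0 - s) < e" if "e > 0" for e
  proof -
    obtain A where "finite A" "\<forall>B. finite B \<and> A \<subseteq> B \<longrightarrow> nv (sum g B - s) < e"
      using assms(1) \<open>e > 0\<close> unfolding nv_has_sum_def by blast
    then have "finite A" "nv (sum g (insert x0 A) - s) < e"
      by auto
    moreover have "sum g (insert x0 A) = g x0"
      using assms(2) \<open>finite A\<close> by (simp add: sum.insert_remove)
    ultimately show ?thesis by simp
  qed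
  then show ?thesis
    using eq_0_if_nv_small[of "g x0 - s"] by simp
qed

lemma nv_prod_diff_le:
  assumes "\<And>j. j \<in> S \<Longrightarrow> nv (a j) \<le> R j" "\<And>j. j \<in> S \<Longrightarrow> nv (b j) \<le> R j"
    and "\<And>j. j \<in> S \<Longrightarrow> nv (a j - b j) * r \<le> R j * d" "r \<ge> 0" "d \<ge> 0"
  shows "nv (prod a S - prod b S) * r \<le> prod R S * d"
  using assms
proof (induction S rule: infinite_finite_induct)
  case (insert x F)
  have R: "0 \<le> R j" if "j \<in> insert x F" for j
    using insert.prems(1)[OF that] nonneg order_trans by blast
  have b: "nv (prod b F) \<le> prod R F"
    unfolding nv_prod using insert.prems(2) nonneg by (intro prod_mono) auto
  have IH: "nv (prod a F - prod b F) * r \<le> prod R F * d"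
    using insert by simp
  have split: "prod a (insert x F) - prod b (insert x F)
      = a x * (prod a F - prod b F) + (a x - b x) * prod b F"
    using insert.hyps by (simp add: algebra_simps)
  have "nv (a x) * (nv (prod a F - prod b F) * r) \<le> R x * (prod R F * d)"
    by (rule mult_mono[OF _ IH]) (use insert.prems(1,4) R nonneg in auto)
  moreover have "(nv (a x - b x) * r) * nv (prod b F) \<le> (R x * d) * prod R F"
    by (rule mult_mono[OF _ b]) (use insert.prems(3,4,5) R nonneg in auto)
  ultimately have "max (nv (a x) * nv (prod a F - prod b F)) (nv (a x - b x) * nv (prod b F)) * r
      \<le> prod R (insert x F) * d"
    using insert.hyps by (simp add: max_def algebra_simps)
  moreover have "nv (prod a (insert x F) - prod b (insert x F))
      \<le> max (nv (a x) * nv (prod a F - prod b F)) (nv (a x - b x) * nv (prod b F))"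
    unfolding split mult[symmetric] by (rule ultrametric)
  ultimately show ?case
    using insert.prems(4) mult_right_mono order_trans by blast
qed simp_all

lemma nv_power_diff_le:
  assumes "nv a \<le> r" "nv b \<le> r" "nv (a - b) \<le> d" "r \<ge> 0" "d \<ge> 0"
  shows "nv (a ^ k - b ^ k) * r \<le> r ^ k * d"
proof -
  have "nv (a - b) * r \<le> r * d"
    using mult_right_mono[OF assms(3,4)] by (simp add: mult.commute)
  then show ?thesis
    using nv_prod_diff_le[of "{..<k}" "\<lambda>_. a" "\<lambda>_. r" "\<lambda>_. b" r d] assms by simp
qed

lemma nv_monomial2_diff_le:
  assumes "pnorm nv p \<le> r" "pnorm nv q \<le> r"
  shows "nv (monomial2 p \<nu> - monomial2 q \<nu>) * r \<le> r ^ total_degree \<nu> * pnorm nv (psub p q)"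
  unfolding monomial2_eq_prod total_degree_def power_sum
proof (rule nv_prod_diff_le)
  show "r \<ge> 0"
    using assms(1) pnorm_nonneg order_trans by blast
  show "pnorm nv (psub p q) \<ge> 0"
    by (rule pnorm_nonneg)
  fix s
  have p: "nv (case_sum (fst p) (snd p) s) \<le> r" and q: "nv (case_sum (fst q) (snd q) s) \<le> r"
    using pnorm_ge_coord assms order_trans by blast+
  then show "nv (case_sum (fst p) (snd p) s ^ \<nu> s) \<le> r ^ \<nu> s"
    "nv (case_sum (fst q) (snd q) s ^ \<nu> s) \<le> r ^ \<nu> s"
    unfolding nv_power using nonneg by (auto intro: power_mono)
  show "nv (case_sum (fst p) (snd p) s ^ \<nu> s - case_sum (fst q) (snd q) s ^ \<nu> s) * r
      \<le> r ^ \<nu> s * pnorm nv (psub p q)"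
    using p q pnorm_ge_coord[of nv "psub p q" s] \<open>r \<ge> 0\<close> pnorm_nonneg
    by (intro nv_power_diff_le) (simp_all add: psub_coord)
qed

section \<open>The nonlinear part of an analytic map\<close>

lemma nv_has_sum_nonlinear_part:
  fixes c :: "('n::finite + 'n \<Rightarrow> nat) \<Rightarrow> 'a" and f :: "('n \<Rightarrow> 'a) \<times> ('n \<Rightarrow> 'a) \<Rightarrow> 'n \<Rightarrow> 'a"
  assumes series: "\<And>q. pnorm nv q < r \<Longrightarrow> nv_has_sum nv (\<lambda>\<nu>. c \<nu> * monomial2 q \<nu>) (f q i)"
    and axes: "\<And>x. vnorm nv x < r \<Longrightarrow> f (x, \<lambda>_. 0) = x \<and> f (\<lambda>_. 0, x) = x"
    and p: "pnorm nv p < r"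
  shows "nv_has_sum nv (\<lambda>\<nu>. if is_mixed \<nu> then c \<nu> * monomial2 p \<nu> else 0) (nonlinear_part f p i)"
proof -
  let ?x = "fst p" and ?y = "snd p" and ?z = "\<lambda>_::'n. 0 :: 'a"
  have r: "r > 0"
    using p pnorm_nonneg le_less_trans by blast
  have xy: "vnorm nv ?x < r" "vnorm nv ?y < r"
    using p by (auto simp: pnorm_def)
  have "c (\<lambda>_. 0) = f (?z, ?z) i"
    using nv_has_sum_eq_single[OF series, of "(?z, ?z)" "\<lambda>_. 0"] r by (simp add: monomial2_zero)
  also have "\<dots> = 0"
    using axes[of ?z] r by simp
  finally have c0: "c (\<lambda>_. 0) = 0" .
  \<comment> \<open>Subtracting the expansions at \<open>(x, 0)\<close> and \<open>(0, y)\<close> cancels every non-mixed monomial.\<close>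
  have "nv_has_sum nv (\<lambda>\<nu>. (c \<nu> * monomial2 p \<nu> - c \<nu> * monomial2 (?x, ?z) \<nu>) - c \<nu> * monomial2 (?z, ?y) \<nu>)
      ((f p i - f (?x, ?z) i) - f (?z, ?y) i)"
    using p xy by (intro nv_has_sum_diff series) simp_all
  moreover have "(f p i - f (?x, ?z) i) - f (?z, ?y) i = nonlinear_part f p i"
    using axes xy by (simp add: nonlinear_part_def)
  moreover have "(c \<nu> * monomial2 p \<nu> - c \<nu> * monomial2 (?x, ?z) \<nu>) - c \<nu> * monomial2 (?z, ?y) \<nu>
      = (if is_mixed \<nu> then c \<nu> * monomial2 p \<nu> else 0)" for \<nu>
  proof -
    have "monomial2 (?x, ?z) \<nu> = (if \<forall>j. \<nu> (Inr j) = 0 then monomial2 p \<nu> else 0)"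
      "monomial2 (?z, ?y) \<nu> = (if \<forall>j. \<nu> (Inl j) = 0 then monomial2 p \<nu> else 0)"
      using monomial2_zero_snd[of ?x \<nu> ?y] monomial2_zero_fst[of ?y \<nu> ?x] by simp_all
    moreover have "\<nu> = (\<lambda>_. 0) \<longleftrightarrow> (\<forall>j. \<nu> (Inl j) = 0) \<and> (\<forall>j. \<nu> (Inr j) = 0)"
      unfolding fun_eq_iff by (rule split_sum_all)
    ultimately show ?thesis
      using c0 by (cases "\<nu> = (\<lambda>_. 0)") (auto simp: is_mixed_def)
  qed
  ultimately show ?thesis
    by simp
qed

lemma nv_mixed_term_diff_le:
  fixes \<nu> :: "'n::finite + 'n \<Rightarrow> nat"
  assumes "is_mixed \<nu>" and coeff: "nv c * \<rho> ^ total_degree \<nu> \<le> B"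
    and r: "0 < r" "r \<le> \<rho>" "B * r \<le> K * \<rho>\<^sup>2"
    and p: "pnorm nv p \<le> r" "pnorm nv q \<le> r"
  shows "nv (c * monomial2 p \<nu> - c * monomial2 q \<nu>) \<le> K * pnorm nv (psub p q)"
proof -
  obtain k where k: "total_degree \<nu> = k + 2"
    using total_degree_ge_2_if_mixed[OF assms(1)] by (metis le_add_diff_inverse2)
  let ?D = "nv (monomial2 p \<nu> - monomial2 q \<nu>)" and ?d = "pnorm nv (psub p q)"
  have \<rho>: "\<rho> > 0"
    using r by linarith
  have B: "B \<ge> 0"
    using coeff nonneg[of c] \<rho> by (meson order_trans zero_le_mult_iff zero_le_power less_imp_le)
  have "(nv c * ?D) * (\<rho> ^ total_degree \<nu> * r) = (nv c * \<rho> ^ total_degree \<nu>) * (?D * r)"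
    by (simp add: ac_simps)
  also have "\<dots> \<le> B * (r ^ total_degree \<nu> * ?d)"
    by (rule mult_mono[OF coeff nv_monomial2_diff_le[OF p]]) (use B nonneg r(1) in auto)
  also have "\<dots> = (B * r) * (r * r ^ k) * ?d"
    by (simp add: k power_add power2_eq_square ac_simps)
  also have "\<dots> \<le> (K * \<rho>\<^sup>2) * (r * \<rho> ^ k) * ?d"
  proof (rule mult_right_mono[OF mult_mono[OF r(3)]])
    show "r * r ^ k \<le> r * \<rho> ^ k"
      using r by (intro mult_left_mono power_mono) auto
    show "0 \<le> K * \<rho>\<^sup>2"
      using B r by (meson less_imp_le mult_nonneg_nonneg order_trans)
  qed (use r pnorm_nonneg[of "psub p q"] in auto)
  also have "\<dots> = (K * ?d) * (\<rho> ^ total_degree \<nu> * r)"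
    by (simp add: k power_add power2_eq_square ac_simps)
  finally show ?thesis
    using \<rho> r(1) by (simp add: mult right_diff_distrib[symmetric])
qed

lemma nv_mixed_series_lipschitz:
  fixes c :: "('n::finite + 'n \<Rightarrow> nat) \<Rightarrow> 'a"
  assumes series: "\<And>q. pnorm nv q \<le> r \<Longrightarrow>
      nv_has_sum nv (\<lambda>\<nu>. if is_mixed \<nu> then c \<nu> * monomial2 q \<nu> else 0) (M q)"
    and coeff: "\<And>\<nu>. nv (c \<nu>) * \<rho> ^ total_degree \<nu> \<le> B"
    and r: "0 < r" "r \<le> \<rho>" "B * r \<le> K * \<rho>\<^sup>2"
    and p: "pnorm nv p \<le> r" "pnorm nv q \<le> r"
  shows "nv (M p - M q) \<le> K * pnorm nv (psub p q)"
proof (rule nv_has_sum_le[OF nv_has_sum_diff[OF series[OF p(1)] series[OF p(2)]]])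
  have "0 \<le> B"
    using coeff[of "\<lambda>_. 0"] nonneg[of "c (\<lambda>_. 0)"] by (simp add: total_degree_def)
  then have "0 \<le> K * \<rho>\<^sup>2"
    using r by (meson less_imp_le mult_nonneg_nonneg order_trans)
  then have "0 \<le> K"
    using r by (simp add: zero_le_mult_iff)
  then show "0 \<le> K * pnorm nv (psub p q)"
    by (simp add: pnorm_nonneg)
  show "nv ((if is_mixed \<nu> then c \<nu> * monomial2 p \<nu> else 0) - (if is_mixed \<nu> then c \<nu> * monomial2 q \<nu> else 0))
      \<le> K * pnorm nv (psub p q)" for \<nu>
    using nv_mixed_term_diff_le[OF _ coeff r p] \<open>0 \<le> K * pnorm nv (psub p q)\<close> by simp
qed

lemma nonlinear_part_lipschitz_near_0:
  fixes c :: "('n::finite + 'n \<Rightarrow> nat) \<Rightarrow> 'n \<Rightarrow> 'a" and f :: "('n \<Rightarrow> 'a) \<times> ('n \<Rightarrow> 'a) \<Rightarrow> 'n \<Rightarrow> 'a"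
  assumes series: "\<And>q i. pnorm nv q < r \<Longrightarrow> nv_has_sum nv (\<lambda>\<nu>. c \<nu> i * monomial2 q \<nu>) (f q i)"
    and axes: "\<And>x. vnorm nv x < r \<Longrightarrow> f (x, \<lambda>_. 0) = x \<and> f (\<lambda>_. 0, x) = x"
    and u: "u \<noteq> 0" "nv u < r" and K: "K > 0"
  shows "\<exists>\<delta>>0. \<delta> < r \<and> (\<forall>p q i. pnorm nv p \<le> \<delta> \<longrightarrow> pnorm nv q \<le> \<delta> \<longrightarrow>
           nv (nonlinear_part f p i - nonlinear_part f q i) \<le> K * pnorm nv (psub p q))"
proof -
  define \<rho> where "\<rho> = nv u"
  have \<rho>: "\<rho> > 0"
    using u(1) nonneg eq_0_iff unfolding \<rho>_def by (metis order_le_less)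
  have u_ball: "pnorm nv (\<lambda>_. u, \<lambda>_. u) < r"
    using u(2) by (simp add: pnorm_def vnorm_def)
  \<comment> \<open>Cauchy estimate: convergence at \<open>(u, ..., u)\<close> bounds \<open>|c_\<nu>| \<rho>^|\<nu>|\<close>.\<close>
  have "\<exists>b\<ge>0. \<forall>\<nu>. nv (c \<nu> i) * \<rho> ^ total_degree \<nu> \<le> b" for i
    using nv_has_sum_terms_bounded[OF series[OF u_ball, of i]]
    by (simp add: monomial2_const mult nv_power \<rho>_def)
  then obtain b where b: "\<And>i. 0 \<le> b i" "\<And>i \<nu>. nv (c \<nu> i) * \<rho> ^ total_degree \<nu> \<le> b i"
    by metis
  define B where "B = (\<Sum>i\<in>UNIV. b i)"
  have bB: "b i \<le> B" for i
    unfolding B_def using b(1) by (intro member_le_sum) auto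
  define \<delta> where "\<delta> = min \<rho> (K * \<rho>\<^sup>2 / (B + 1))"
  have B: "B \<ge> 0"
    using b(1) bB order_trans by blast
  have \<delta>: "0 < \<delta>" "\<delta> \<le> \<rho>"
    using \<rho> K B unfolding \<delta>_def by auto
  have "b i * \<delta> \<le> K * \<rho>\<^sup>2" for i
  proof -
    have "b i * \<delta> \<le> (B + 1) * \<delta>"
      using bB[of i] \<delta> by (intro mult_right_mono) auto
    also have "\<dots> \<le> (B + 1) * (K * \<rho>\<^sup>2 / (B + 1))"
      using B unfolding \<delta>_def by (intro mult_left_mono) auto
    finally show ?thesis
      using B by simp
  qed
  moreover have "nv_has_sum nv (\<lambda>\<nu>. if is_mixed \<nu> then c \<nu> i * monomial2 q \<nu> else 0) (nonlinear_part f q i)"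
    if "pnorm nv q \<le> \<delta>" for q i
    using that \<delta> u(2) unfolding \<rho>_def by (intro nv_has_sum_nonlinear_part series axes) auto
  ultimately show ?thesis
    using \<delta> b(2) u(2) unfolding \<rho>_def by (intro exI[of _ \<delta>] conjI allI impI nv_mixed_series_lipschitz) auto
qed

lemma nv_diff_le_if_nonlinear_part_contracts:
  assumes "nv (nonlinear_part f p i - nonlinear_part f q i) \<le> K * pnorm nv (psub p q)" "K \<le> 1"
  shows "nv (f p i - f q i) \<le> pnorm nv (psub p q)"
proof -
  let ?d = "pnorm nv (psub p q)"
  have split: "f p i - f q i = ((fst p i - fst q i) + (snd p i - snd q i))
      + (nonlinear_part f p i - nonlinear_part f q i)"
    by (simp add: nonlinear_part_def algebra_simps)
  have "K * ?d \<le> ?d"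
    using mult_right_mono[OF assms(2) pnorm_nonneg[of "psub p q"]] by simp
  then have "nv (nonlinear_part f p i - nonlinear_part f q i) \<le> ?d"
    using assms(1) by linarith
  moreover have "nv (fst p i - fst q i) \<le> ?d" "nv (snd p i - snd q i) \<le> ?d"
    using pnorm_ge_coord[of nv "psub p q" "Inl i"] pnorm_ge_coord[of nv "psub p q" "Inr i"]
    by (simp_all add: psub_def vsub_def)
  ultimately show ?thesis
    unfolding split by (intro nv_add_le)
qed

end

section \<open>The absolute value of a discrete valuation ring\<close>

lemma subring_power: "subring_of R \<Longrightarrow> t \<in> R \<Longrightarrow> t ^ n \<in> R"
  by (induction n) (auto simp: subring_of_def)

locale dvr_abs =
  fixes R0 :: "'a::field set" and t :: 'a and \<alpha> :: real and nv :: "'a \<Rightarrow> real"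
  assumes dvr: "dvr_frac_field R0 t" and alpha: "\<alpha> > 1" and nv_zero: "nv 0 = 0"
    and nv_val: "\<And>(k::int) u. unit_in R0 u \<Longrightarrow> nv (t powi k * u) = \<alpha> powr (- real_of_int k)"
begin

lemma R0_subring: "subring_of R0" and t_in_R0: "t \<in> R0" and t_nonzero: "t \<noteq> 0"
  and t_not_unit: "\<not> unit_in R0 t"
  and unit_factorization: "\<And>x. x \<noteq> 0 \<Longrightarrow> \<exists>k::int. \<exists>u. unit_in R0 u \<and> x = t powi k * u"
  using dvr unfolding dvr_frac_field_def by auto

lemma unit_mult: "unit_in R0 u \<Longrightarrow> unit_in R0 v \<Longrightarrow> unit_in R0 (u * v)"
  using R0_subring by (simp add: unit_in_def subring_of_def inverse_mult_distrib)

lemma nv_pos: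
  assumes "x \<noteq> 0"
  shows "nv x > 0"
proof -
  obtain k u where "unit_in R0 u" "x = t powi k * u"
    using unit_factorization[OF assms] by blast
  then show ?thesis
    using nv_val alpha by simp
qed

lemma nv_mult: "nv (x * y) = nv x * nv y"
proof (cases "x = 0 \<or> y = 0")
  case True
  then show ?thesis
    using nv_zero by auto
next
  case False
  then obtain k j u v where u: "unit_in R0 u" "x = t powi k * u" and v: "unit_in R0 v" "y = t powi j * v"
    using unit_factorization by metis
  then have "x * y = t powi (k + j) * (u * v)"
    using t_nonzero by (simp add: power_int_add ac_simps)
  then have "nv (x * y) = \<alpha> powr (- real_of_int k) * \<alpha> powr (- real_of_int j)"
    using nv_val[OF unit_mult[OF u(1) v(1)]] by (simp add: powr_add[symmetric])
  then show ?thesis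
    using nv_val u v by simp
qed

lemma powi_unit_mem_iff:
  assumes "unit_in R0 u"
  shows "t powi k * u \<in> R0 \<longleftrightarrow> 0 \<le> k"
proof
  assume "t powi k * u \<in> R0"
  show "0 \<le> k"
  proof (rule ccontr)
    assume "\<not> 0 \<le> k"
    then have B: "t ^ nat (- k - 1) = t powi (- k - 1)"
      by (simp add: power_int_def)
    have A: "(t powi k * u) * inverse u = t powi k"
      using assms by (simp add: unit_in_def)
    have "inverse t = t powi k * t powi (- k - 1)"
      using t_nonzero by (simp add: power_int_add[symmetric])
    also have "\<dots> = (t powi k * u) * inverse u * t ^ nat (- k - 1)"
      unfolding A B by (rule refl)
    also have "\<dots> \<in> R0"
      using \<open>t powi k * u \<in> R0\<close> assms R0_subring subring_power[OF R0_subring t_in_R0]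
      unfolding unit_in_def subring_of_def by blast
    finally show False
      using t_not_unit t_in_R0 t_nonzero unfolding unit_in_def by simp
  qed
next
  assume "0 \<le> k"
  then have "t powi k = t ^ nat k"
    by (simp add: power_int_def)
  then show "t powi k * u \<in> R0"
    using assms R0_subring subring_power[OF R0_subring t_in_R0, of "nat k"]
    unfolding unit_in_def subring_of_def by simp
qed

lemma mem_iff_nv_le_1: "x \<in> R0 \<longleftrightarrow> nv x \<le> 1"
proof (cases "x = 0")
  case True
  then show ?thesis
    using R0_subring nv_zero by (simp add: subring_of_def)
next
  case False
  then obtain k u where "unit_in R0 u" "x = t powi k * u"
    using unit_factorization by metis
  moreover have "\<alpha> powr (- real_of_int k) \<le> 1 \<longleftrightarrow> 0 \<le> k"
    using powr_le_cancel_iff[OF alpha, of "- real_of_int k" 0] alpha by simp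
  ultimately show ?thesis
    using powi_unit_mem_iff nv_val by simp
qed

lemma nv_ultrametric: "nv (x + y) \<le> max (nv x) (nv y)"
proof -
  have dominant: "nv (x + y) \<le> nv x" if "nv y \<le> nv x" for x y
  proof (cases "x = 0")
    case True
    then show ?thesis
      using that by simp
  next
    case False
    define z where "z = y / x"
    have y: "y = x * z"
      using False by (simp add: z_def)
    have "nv x * nv z \<le> nv x * 1"
      using that by (simp add: y nv_mult)
    then have "nv z \<le> 1"
      using nv_pos[OF False] by (simp only: mult_le_cancel_left_pos)
    then have "nv (1 + z) \<le> 1"
      using R0_subring mem_iff_nv_le_1 unfolding subring_of_def by blast
    then have "nv x * nv (1 + z) \<le> nv x"
      using nv_pos[OF False] by (simp add: mult_left_le)
    moreover have "x + y = x * (1 + z)"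
      by (simp add: y distrib_left)
    ultimately show ?thesis
      by (simp only: nv_mult)
  qed
  show ?thesis
  proof (cases "nv y \<le> nv x")
    case True
    then show ?thesis
      using dominant[of y x] by simp
  next
    case False
    then have "nv (y + x) \<le> nv y"
      by (intro dominant) simp
    then show ?thesis
      by (simp add: add.commute[of x y])
  qed
qed

lemma nv_nonneg: "nv x \<ge> 0"
  using nv_pos[of x] nv_zero by (cases "x = 0") auto

lemma nv_eq_0_iff: "nv x = 0 \<longleftrightarrow> x = 0"
  using nv_pos[of x] nv_zero by (cases "x = 0") simp_all

sublocale nonarchimedean_abs nv
  using nv_nonneg nv_eq_0_iff nv_mult nv_ultrametric by unfold_locales

lemma nv_t: "nv t = inverse \<alpha>"
  using nv_val[of 1 1] R0_subring t_nonzero alpha by (simp add: unit_in_def subring_of_def powr_minus)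

lemma nv_t_pos: "nv t > 0" and nv_t_less_1: "nv t < 1"
  using alpha by (simp_all add: nv_t inverse_less_1_iff)

lemma nv_t_power_antimono: "j \<le> k \<Longrightarrow> nv t ^ k \<le> nv t ^ j"
  using nv_t_pos nv_t_less_1 by (intro power_decreasing) auto

lemma eq_0_if_nv_le_t_powers:
  assumes "\<And>m. nv x \<le> nv t ^ m"
  shows "x = 0"
proof (rule eq_0_if_nv_small)
  fix e :: real
  assume "e > 0"
  then obtain m where "nv t ^ m < e"
    using real_arch_pow_inv nv_t_less_1 by blast
  then show "nv x < e"
    using assms[of m] by linarith
qed

lemma nonlinear_part_contracts_near_0:
  fixes f :: "('n::finite \<Rightarrow> 'a) \<times> ('n \<Rightarrow> 'a) \<Rightarrow> 'n \<Rightarrow> 'a"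
  assumes f_an: "analytic_pair_on nv \<Omega> f" and "(\<lambda>_. 0, \<lambda>_. 0) \<in> \<Omega>"
    and f_id: "\<exists>U. open_vec nv U \<and> (\<lambda>_. 0) \<in> U \<and> (\<forall>x\<in>U. f (x, \<lambda>_. 0) = x \<and> f (\<lambda>_. 0, x) = x)"
  shows "\<exists>N. (\<forall>p. pnorm nv p \<le> nv t ^ N \<longrightarrow> p \<in> \<Omega>) \<and>
    (\<forall>p q i. pnorm nv p \<le> nv t ^ N \<longrightarrow> pnorm nv q \<le> nv t ^ N \<longrightarrow>
      nv (nonlinear_part f p i - nonlinear_part f q i) \<le> nv t * pnorm nv (psub p q))"
proof -
  obtain r c where "r > 0" and "\<forall>q. pnorm nv (psub q (\<lambda>_. 0, \<lambda>_. 0)) < r \<longrightarrow>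
      q \<in> \<Omega> \<and> (\<forall>i. nv_has_sum nv (\<lambda>\<nu>. c \<nu> i * monomial2 (psub q (\<lambda>_. 0, \<lambda>_. 0)) \<nu>) (f q i))"
    using bspec[OF f_an[unfolded analytic_pair_on_def] assms(2)] by blast
  then have at_0: "\<And>q. pnorm nv q < r \<Longrightarrow>
      q \<in> \<Omega> \<and> (\<forall>i. nv_has_sum nv (\<lambda>\<nu>. c \<nu> i * monomial2 q \<nu>) (f q i))"
    unfolding psub_zero by blast
  obtain U where "open_vec nv U" "(\<lambda>_. 0) \<in> U" and U: "\<forall>x\<in>U. f (x, \<lambda>_. 0) = x \<and> f (\<lambda>_. 0, x) = x"
    using f_id by blast
  then obtain rU where "rU > 0" "\<forall>x. vnorm nv (vsub x (\<lambda>_. 0)) < rU \<longrightarrow> x \<in> U"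
    unfolding open_vec_def by blast
  then have axes: "\<And>x. vnorm nv x < min r rU \<Longrightarrow> f (x, \<lambda>_. 0) = x \<and> f (\<lambda>_. 0, x) = x"
    using U by simp
  obtain m where "nv t ^ m < min r rU"
    using real_arch_pow_inv[of "min r rU" "nv t"] \<open>r > 0\<close> \<open>rU > 0\<close> nv_t_less_1 by auto
  then obtain \<delta> where \<delta>: "\<delta> > 0" "\<delta> < min r rU"
    and lipschitz: "\<And>p q i. pnorm nv p \<le> \<delta> \<Longrightarrow> pnorm nv q \<le> \<delta> \<Longrightarrow>
      nv (nonlinear_part f p i - nonlinear_part f q i) \<le> nv t * pnorm nv (psub p q)"
    using nonlinear_part_lipschitz_near_0[of "min r rU" c f "t ^ m" "nv t"] at_0 axes
      t_nonzero nv_t_pos by (auto simp: nv_power)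
  obtain N where "nv t ^ N < \<delta>"
    using real_arch_pow_inv[OF \<delta>(1) nv_t_less_1] by blast
  then show ?thesis
    using at_0 \<delta>(2) lipschitz by (intro exI[of _ N]) auto
qed

lemma mem_smul_power_if_nv_le:
  assumes "nv x \<le> nv t ^ m"
  shows "x \<in> smul_set (t ^ m) R0"
proof -
  have "nv t ^ m * nv (x / t ^ m) \<le> nv t ^ m * 1"
    using assms t_nonzero by (simp add: mult[symmetric] nv_power[symmetric])
  then have "nv (x / t ^ m) \<le> 1"
    using nv_t_pos by (simp only: mult_le_cancel_left_pos zero_less_power)
  moreover have "x = t ^ m * (x / t ^ m)"
    using t_nonzero by simp
  ultimately show ?thesis
    unfolding smul_set_def using mem_iff_nv_le_1 by blast
qed

lemma nv_le_if_mem_smul_power: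
  assumes "X \<subseteq> R0" "x \<in> smul_set (t ^ m) X"
  shows "nv x \<le> nv t ^ m"
proof -
  obtain y where "y \<in> X" "x = t ^ m * y"
    using assms(2) unfolding smul_set_def by blast
  then show ?thesis
    using assms(1) mem_iff_nv_le_1 nv_t_pos
    by (auto simp: mult nv_power intro: mult_left_le)
qed

end

section \<open>Successive approximation\<close>

lemma submodule_power_mult_mem:
  assumes "submodule_over T X" "t \<in> T" "x \<in> X"
  shows "t ^ n * x \<in> X"
  using assms by (induction n) (simp_all add: submodule_over_def mult.assoc)

lemma smul_set_power_mono:
  assumes "submodule_over T X" "t \<in> T" "j \<le> k"
  shows "smul_set (t ^ k) X \<subseteq> smul_set (t ^ j) X"
proof
  fix x
  assume "x \<in> smul_set (t ^ k) X"
  then obtain y where "y \<in> X" "x = t ^ k * y"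
    unfolding smul_set_def by blast
  then have "x = t ^ j * (t ^ (k - j) * y)" and "t ^ (k - j) * y \<in> X"
    using assms submodule_power_mult_mem by (simp_all add: power_add[symmetric] mult.assoc[symmetric])
  then show "x \<in> smul_set (t ^ j) X"
    unfolding smul_set_def by blast
qed

lemma smul_set_power_subset:
  assumes "submodule_over T X" "t \<in> T"
  shows "smul_set (t ^ k) X \<subseteq> X"
  using smul_set_power_mono[OF assms, of 0 k] by (simp add: smul_set_def)

lemma t_adic_limit_vector:
  assumes "t_adically_complete t X"
    and "\<And>k i. xs k i \<in> X" "\<And>k i. xs (Suc k) i - xs k i \<in> smul_set (t ^ Suc k) X"
  shows "\<exists>x. \<forall>i. x i \<in> X \<and> (\<forall>m. x i - xs m i \<in> smul_set (t ^ Suc m) X)"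
proof -
  have limit: "\<exists>y\<in>X. \<forall>m. y - ys m \<in> smul_set (t ^ Suc m) X"
    if "\<And>k. ys k \<in> X" "\<And>k. ys (Suc k) - ys k \<in> smul_set (t ^ Suc k) X" for ys
    using assms(1) that unfolding t_adically_complete_def by blast
  have "\<forall>i. \<exists>y. y \<in> X \<and> (\<forall>m. y - xs m i \<in> smul_set (t ^ Suc m) X)"
    using limit[of "\<lambda>m. xs m _"] assms(2,3) by blast
  then show ?thesis
    by (rule choice)
qed

locale dvr_splitting = dvr_abs +
  fixes T V W :: "'a::field set"
  assumes t_in_T: "t \<in> T"
    and V_sub: "V \<subseteq> R0" and W_sub: "W \<subseteq> R0"
    and V_module: "submodule_over T V" and W_module: "submodule_over T W"
    and V_complete: "t_adically_complete t V" and W_complete: "t_adically_complete t W"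
    and R0_split: "{v + w |v w. v \<in> V \<and> w \<in> W} = R0"
begin

lemma split_small:
  assumes "nv z \<le> nv t ^ m"
  shows "\<exists>v w. v \<in> smul_set (t ^ m) V \<and> w \<in> smul_set (t ^ m) W \<and> z = v + w"
proof -
  obtain r where "r \<in> R0" "z = t ^ m * r"
    using mem_smul_power_if_nv_le[OF assms] unfolding smul_set_def by blast
  moreover obtain v w where "v \<in> V" "w \<in> W" "r = v + w"
    using \<open>r \<in> R0\<close> R0_split by blast
  ultimately show ?thesis
    unfolding smul_set_def by (intro exI[of _ "t ^ m * v"] exI[of _ "t ^ m * w"]) (auto simp: distrib_left)
qed

lemma split_small_vector:
  assumes "vnorm nv e \<le> nv t ^ m"
  shows "\<exists>d. \<forall>i. fst d i \<in> smul_set (t ^ m) V \<and> snd d i \<in> smul_set (t ^ m) W \<and> e i = fst d i + snd d i"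
proof -
  have "\<exists>vw. fst vw \<in> smul_set (t ^ m) V \<and> snd vw \<in> smul_set (t ^ m) W \<and> e i = fst vw + snd vw" for i
  proof -
    have "nv (e i) \<le> nv t ^ m"
      using vnorm_ge[of nv e i] assms by linarith
    then show ?thesis
      using split_small by fastforce
  qed
  then obtain g where "\<forall>i. fst (g i) \<in> smul_set (t ^ m) V \<and> snd (g i) \<in> smul_set (t ^ m) W \<and> e i = fst (g i) + snd (g i)"
    using choice[of "\<lambda>i vw. fst vw \<in> smul_set (t ^ m) V \<and> snd vw \<in> smul_set (t ^ m) W \<and> e i = fst vw + snd vw"]
    by blast
  then show ?thesis
    by (intro exI[of _ "(\<lambda>i. fst (g i), \<lambda>i. snd (g i))"]) simp
qed

definition approx_solution ::
    "(('n::finite \<Rightarrow> 'a) \<times> ('n \<Rightarrow> 'a) \<Rightarrow> 'n \<Rightarrow> 'a) \<Rightarrow> ('n \<Rightarrow> 'a) \<Rightarrow> real \<Rightarrow> nat \<Rightarrow> ('n \<Rightarrow> 'a) \<times> ('n \<Rightarrow> 'a) \<Rightarrow> bool"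
  where "approx_solution f a \<epsilon> m p \<longleftrightarrow>
    (\<forall>i. fst p i \<in> V \<and> snd p i \<in> W) \<and> pnorm nv p \<le> \<epsilon> \<and> vnorm nv (vsub a (f p)) \<le> nv t ^ m"

lemma approximation_step:
  assumes contraction: "\<And>p q i. pnorm nv p \<le> \<epsilon> \<Longrightarrow> pnorm nv q \<le> \<epsilon> \<Longrightarrow>
      nv (nonlinear_part f p i - nonlinear_part f q i) \<le> nv t * pnorm nv (psub p q)"
    and m: "nv t ^ m \<le> \<epsilon>" and p: "approx_solution f a \<epsilon> m p"
  shows "\<exists>p'. approx_solution f a \<epsilon> (Suc m) p' \<and>
    (\<forall>i. fst p' i - fst p i \<in> smul_set (t ^ m) V \<and> snd p' i - snd p i \<in> smul_set (t ^ m) W)"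
proof -
  have "vnorm nv (vsub a (f p)) \<le> nv t ^ m"
    using p by (simp add: approx_solution_def)
  then obtain d where "\<forall>i. fst d i \<in> smul_set (t ^ m) V \<and> snd d i \<in> smul_set (t ^ m) W \<and>
      vsub a (f p) i = fst d i + snd d i"
    using split_small_vector by blast
  then have d: "\<And>i. fst d i \<in> smul_set (t ^ m) V" "\<And>i. snd d i \<in> smul_set (t ^ m) W"
    "\<And>i. a i - f p i = fst d i + snd d i"
    by (simp_all add: vsub_def)
  define p' where "p' = (\<lambda>i. fst p i + fst d i, \<lambda>i. snd p i + snd d i)"
  have d_small: "nv (fst d i) \<le> nv t ^ m" "nv (snd d i) \<le> nv t ^ m" for i
    using d V_sub W_sub nv_le_if_mem_smul_power by blast+
  have "fst d i \<in> V" "snd d i \<in> W" for i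
    using d smul_set_power_subset[OF V_module t_in_T] smul_set_power_subset[OF W_module t_in_T] by blast+
  then have mem: "\<forall>i. fst p' i \<in> V \<and> snd p' i \<in> W"
    using p V_module W_module unfolding approx_solution_def submodule_over_def p'_def by simp
  have "nv (fst d i) \<le> \<epsilon>" "nv (snd d i) \<le> \<epsilon>" for i
    using d_small m order_trans by blast+
  then have ball: "pnorm nv p' \<le> \<epsilon>"
    using p unfolding approx_solution_def pnorm_le_iff p'_def by (auto intro!: nv_add_le)
  have "pnorm nv (psub p' p) \<le> nv t ^ m"
    using d_small by (simp add: pnorm_le_iff psub_def vsub_def p'_def)
  then have "nv (a i - f p' i) \<le> nv t ^ Suc m" for i
  proof -
    have "a i - f p' i = - (nonlinear_part f p' i - nonlinear_part f p i)"
      using d(3)[of i] by (simp add: nonlinear_part_def p'_def algebra_simps)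
    moreover have "pnorm nv p \<le> \<epsilon>"
      using p by (simp add: approx_solution_def)
    ultimately have "nv (a i - f p' i) \<le> nv t * pnorm nv (psub p' p)"
      using contraction[OF ball, of p i] by (simp only: nv_minus)
    also have "\<dots> \<le> nv t * nv t ^ m"
      using \<open>pnorm nv (psub p' p) \<le> nv t ^ m\<close> nv_t_pos by (simp add: mult_left_mono)
    finally show ?thesis
      by simp
  qed
  then have "approx_solution f a \<epsilon> (Suc m) p'"
    using mem ball by (simp add: approx_solution_def vnorm_le_iff vsub_def)
  moreover have "\<forall>i. fst p' i - fst p i \<in> smul_set (t ^ m) V \<and> snd p' i - snd p i \<in> smul_set (t ^ m) W"
    using d by (simp add: p'_def)
  ultimately show ?thesis
    by blast
qed

lemma approximating_sequence_exists:
  assumes contraction: "\<And>p q i. pnorm nv p \<le> nv t ^ N \<Longrightarrow> pnorm nv q \<le> nv t ^ N \<Longrightarrow>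
      nv (nonlinear_part f p i - nonlinear_part f q i) \<le> nv t * pnorm nv (psub p q)"
    and f0: "f (\<lambda>_. 0, \<lambda>_. 0) = (\<lambda>_. 0)" and a: "vnorm nv a \<le> nv t ^ N"
  shows "\<exists>P. \<forall>k. approx_solution f a (nv t ^ N) (N + k) (P k) \<and>
    (\<forall>i. fst (P (Suc k)) i - fst (P k) i \<in> smul_set (t ^ (N + k)) V \<and>
         snd (P (Suc k)) i - snd (P k) i \<in> smul_set (t ^ (N + k)) W)"
proof -
  have "approx_solution f a (nv t ^ N) (N + 0) (\<lambda>_. 0, \<lambda>_. 0)"
    using a V_module W_module nv_t_pos by (simp add: approx_solution_def submodule_over_def f0 pnorm_def)
  then have start: "\<exists>p. approx_solution f a (nv t ^ N) (N + 0) p" ..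
  have step: "\<exists>p'. approx_solution f a (nv t ^ N) (N + Suc k) p' \<and>
      (\<forall>i. fst p' i - fst p i \<in> smul_set (t ^ (N + k)) V \<and> snd p' i - snd p i \<in> smul_set (t ^ (N + k)) W)"
    if "approx_solution f a (nv t ^ N) (N + k) p" for p k
  proof -
    have "nv t ^ (N + k) \<le> nv t ^ N"
      by (rule nv_t_power_antimono) simp
    then show ?thesis
      using approximation_step[OF contraction _ that] by simp
  qed
  show ?thesis
    using dependent_nat_choice[where P = "\<lambda>k p. approx_solution f a (nv t ^ N) (N + k) p"
        and Q = "\<lambda>k p p'. \<forall>i. fst p' i - fst p i \<in> smul_set (t ^ (N + k)) V \<and>
          snd p' i - snd p i \<in> smul_set (t ^ (N + k)) W", OF start step]
    by blast
qed

lemma t_adic_limit_pair: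
  assumes mem: "\<And>k i. fst (P k) i \<in> V" "\<And>k i. snd (P k) i \<in> W"
    and incr: "\<And>k i. fst (P (Suc k)) i - fst (P k) i \<in> smul_set (t ^ k) V"
      "\<And>k i. snd (P (Suc k)) i - snd (P k) i \<in> smul_set (t ^ k) W"
  shows "\<exists>v w. (\<forall>i. v i \<in> V \<and> w i \<in> W) \<and> (\<forall>m. pnorm nv (psub (v, w) (P (Suc m))) \<le> nv t ^ Suc m)"
proof -
  obtain v where v: "\<forall>i. v i \<in> V \<and> (\<forall>m. v i - fst (P (Suc m)) i \<in> smul_set (t ^ Suc m) V)"
    using t_adic_limit_vector[OF V_complete, of "\<lambda>k. fst (P (Suc k))", OF mem(1) incr(1)] by blast
  obtain w where w: "\<forall>i. w i \<in> W \<and> (\<forall>m. w i - snd (P (Suc m)) i \<in> smul_set (t ^ Suc m) W)"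
    using t_adic_limit_vector[OF W_complete, of "\<lambda>k. snd (P (Suc k))", OF mem(2) incr(2)] by blast
  have "pnorm nv (psub (v, w) (P (Suc m))) \<le> nv t ^ Suc m" for m
  proof -
    have "nv (v i - fst (P (Suc m)) i) \<le> nv t ^ Suc m" "nv (w i - snd (P (Suc m)) i) \<le> nv t ^ Suc m" for i
      using v w V_sub W_sub nv_le_if_mem_smul_power by blast+
    then show ?thesis
      by (simp add: pnorm_le_iff psub_def vsub_def)
  qed
  then show ?thesis
    using v w by blast
qed

lemma split_solution_exists:
  assumes contraction: "\<And>p q i. pnorm nv p \<le> nv t ^ N \<Longrightarrow> pnorm nv q \<le> nv t ^ N \<Longrightarrow>
      nv (nonlinear_part f p i - nonlinear_part f q i) \<le> nv t * pnorm nv (psub p q)"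
    and f0: "f (\<lambda>_. 0, \<lambda>_. 0) = (\<lambda>_. 0)" and a: "vnorm nv a \<le> nv t ^ N"
  shows "\<exists>v w. (\<forall>i. v i \<in> V) \<and> (\<forall>i. w i \<in> W) \<and> pnorm nv (v, w) \<le> nv t ^ N \<and> f (v, w) = a"
proof -
  obtain P where P: "\<And>k. approx_solution f a (nv t ^ N) (N + k) (P k)"
    and "\<And>k i. fst (P (Suc k)) i - fst (P k) i \<in> smul_set (t ^ (N + k)) V"
      "\<And>k i. snd (P (Suc k)) i - snd (P k) i \<in> smul_set (t ^ (N + k)) W"
    using approximating_sequence_exists[OF contraction f0 a] by blast
  then have "fst (P k) i \<in> V" "snd (P k) i \<in> W"
    "fst (P (Suc k)) i - fst (P k) i \<in> smul_set (t ^ k) V"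
    "snd (P (Suc k)) i - snd (P k) i \<in> smul_set (t ^ k) W" for k i
    using smul_set_power_mono[OF V_module t_in_T, of k "N + k"]
      smul_set_power_mono[OF W_module t_in_T, of k "N + k"] by (auto simp: approx_solution_def)
  then obtain v w where vw: "\<forall>i. v i \<in> V \<and> w i \<in> W"
    and close: "\<And>m. pnorm nv (psub (v, w) (P (Suc m))) \<le> nv t ^ Suc m"
    using t_adic_limit_pair by blast
  have P_ball: "pnorm nv (P k) \<le> nv t ^ N" for k
    using P by (simp add: approx_solution_def)
  have "pnorm nv (psub (v, w) (P (Suc N))) \<le> nv t ^ N"
    using close[of N] nv_t_power_antimono[of N "Suc N"] by linarith
  then have ball: "pnorm nv (v, w) \<le> nv t ^ N"
    by (rule pnorm_le_if_psub_le[OF P_ball])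
  have "nv (a i - f (v, w) i) \<le> nv t ^ m" for i m
  proof -
    have "nv (a i - f (P (Suc m)) i) \<le> nv t ^ (N + Suc m)"
      using P[of "Suc m"] vnorm_ge[of nv "vsub a (f (P (Suc m)))" i]
      by (simp add: approx_solution_def vsub_def)
    also have "\<dots> \<le> nv t ^ m"
      by (rule nv_t_power_antimono) simp
    finally have error: "nv (a i - f (P (Suc m)) i) \<le> nv t ^ m" .
    have "nv (f (v, w) i - f (P (Suc m)) i) \<le> pnorm nv (psub (v, w) (P (Suc m)))"
      using contraction[OF ball P_ball] nv_t_less_1
      by (intro nv_diff_le_if_nonlinear_part_contracts) auto
    also have "\<dots> \<le> nv t ^ m"
      using close[of m] nv_t_power_antimono[of m "Suc m"] by simp
    finally have "nv ((a i - f (P (Suc m)) i) - (f (v, w) i - f (P (Suc m)) i)) \<le> nv t ^ m"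
      by (rule nv_diff_le[OF error])
    then show ?thesis
      by simp
  qed
  then have "a i - f (v, w) i = 0" for i
    by (rule eq_0_if_nv_le_t_powers)
  then have "f (v, w) = a"
    by (simp add: fun_eq_iff)
  then show ?thesis
    using vw ball by blast
qed

end

theorem corollary3p3:
  fixes T R0 F1 F2 V W :: "'a::field set"
    and t :: 'a and \<alpha> :: real and nv :: "'a \<Rightarrow> real"
    and \<Omega> :: "(('n::finite \<Rightarrow> 'a) \<times> ('n \<Rightarrow> 'a)) set"
    and f :: "('n \<Rightarrow> 'a) \<times> ('n \<Rightarrow> 'a) \<Rightarrow> ('n \<Rightarrow> 'a)"
  assumes T_dvr: "dvr_with_uniformizer T t" and T_complete: "t_adically_complete t T"
    and R0_dvr: "dvr_frac_field R0 t" and R0_complete: "t_adically_complete t R0"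
    and T_sub: "T \<subseteq> R0"
    and alpha: "\<alpha> > 1"
    and nv0: "nv 0 = 0"
    and nv_val: "\<And>(k::int) u. unit_in R0 u \<Longrightarrow> nv (t powi k * u) = \<alpha> powr (- real_of_int k)"
    and F1: "subfield_of F1" "T \<subseteq> F1" and F2: "subfield_of F2" "T \<subseteq> F2"
    and V: "V \<subseteq> F1 \<inter> R0" "submodule_over T V" "t_adically_complete t V"
    and W: "W \<subseteq> F2 \<inter> R0" "submodule_over T W" "t_adically_complete t W"
    and VW: "{v + w | v w. v \<in> V \<and> w \<in> W} = R0"
    and Vt: "V \<inter> smul_set t R0 = smul_set t V"
    and Wt: "W \<inter> smul_set t R0 = smul_set t W"
    and \<Omega>: "open_pair nv \<Omega>" "((\<lambda>_. 0), (\<lambda>_. 0)) \<in> \<Omega>"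
    and f_an: "analytic_pair_on nv \<Omega> f"
    and f0: "f ((\<lambda>_. 0), (\<lambda>_. 0)) = (\<lambda>_. 0)"
    and f_id: "\<exists>U. open_vec nv U \<and> (\<lambda>_. 0) \<in> U \<and> (\<forall>x\<in>U. f (x, (\<lambda>_. 0)) = x \<and> f ((\<lambda>_. 0), x) = x)"
  shows "\<exists>\<epsilon>>0. \<forall>a :: 'n \<Rightarrow> 'a. vnorm nv a \<le> \<epsilon> \<longrightarrow>
           (\<exists>v w. (\<forall>i. v i \<in> V) \<and> (\<forall>i. w i \<in> W) \<and> (v, w) \<in> \<Omega> \<and> f (v, w) = a)"
proof -
  interpret dvr_splitting R0 t \<alpha> nv T V W
    using T_dvr R0_dvr alpha nv0 nv_val V W VW
    by unfold_locales (auto simp: dvr_with_uniformizer_def)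
  obtain N where inside: "\<And>p. pnorm nv p \<le> nv t ^ N \<Longrightarrow> p \<in> \<Omega>"
    and contraction: "\<And>p q i. pnorm nv p \<le> nv t ^ N \<Longrightarrow> pnorm nv q \<le> nv t ^ N \<Longrightarrow>
      nv (nonlinear_part f p i - nonlinear_part f q i) \<le> nv t * pnorm nv (psub p q)"
    using nonlinear_part_contracts_near_0[OF f_an \<Omega>(2) f_id] by blast
  show ?thesis
  proof (intro exI[of _ "nv t ^ N"] conjI allI impI)
    show "nv t ^ N > 0"
      using nv_t_pos by simp
    fix a :: "'n \<Rightarrow> 'a"
    assume "vnorm nv a \<le> nv t ^ N"
    then show "\<exists>v w. (\<forall>i. v i \<in> V) \<and> (\<forall>i. w i \<in> W) \<and> (v, w) \<in> \<Omega> \<and> f (v, w) = a"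
      using split_solution_exists[OF contraction f0] inside by blast
  qed
qed

end
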